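(* Let $\mathcal H$ be a Hilbert space and $\mathcal S,\mathcal A\subseteq\mathcal H$ closed subspaces with $\mathcal S,\mathcal A,\mathcal S^\perp,\mathcal A^\perp$ nonzero and $\mathcal A\oplus\mathcal S^\perp=\mathcal H$. Fix $\lambda\in[0,1]$, let $B:=\lambda P_{\mathcal A\mathcal S^\perp}+(1-\lambda)P_{\mathcal S}$ and $\mathcal B:=\mathcal R(B)$. Then $$\frac{1}{1+\lambda^2\frac{\sin^2(\mathcal A,\mathcal S)}{\cos^2(\mathcal A,\mathcal S)}}\le\cos^2(\mathcal B,\mathcal S)\le\frac{1}{1+\lambda^2\frac{\cos^2(\mathcal A,\mathcal S^\perp)}{\sin^2(\mathcal A,\mathcal S^\perp)}}.$$ In particular $\cos(\mathcal B,\mathcal S)\ge\cos(\mathcal A,\mathcal S)$.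
   Context: $P_{\mathcal V}$ is the orthogonal projection onto a closed subspace $\mathcal V$, $\mathcal V^\perp$ its orthogonal complement, $\mathcal R(\cdot)$ the range. For closed subspaces with $\mathcal V_1\oplus\mathcal V_2=\mathcal H$, $P_{\mathcal V_1\mathcal V_2}$ is the oblique projection onto $\mathcal V_1$ along $\mathcal V_2$ (identity on $\mathcal V_1$, zero on $\mathcal V_2$). Angles between nonzero closed subspaces: $\cos(\mathcal V_1,\mathcal V_2):=\inf_{0\ne x\in\mathcal V_1}\|P_{\mathcal V_2}x\|/\|x\|$, $\sin(\mathcal V_1,\mathcal V_2):=\sup_{0\ne x\in\mathcal V_1}\|P_{\mathcal V_2^\perp}x\|/\|x\|$. *)

theory Defs
  imports "HOL-Analysis.Analysis"
begin

definition oproj :: "'a::real_inner set \<Rightarrow> 'a \<Rightarrow> 'a" where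
  "oproj V x = (THE v. v \<in> V \<and> x - v \<in> orthogonal_comp V)"

definition obproj :: "'a::real_vector set \<Rightarrow> 'a set \<Rightarrow> 'a \<Rightarrow> 'a" where
  "obproj V1 V2 x = (THE v. v \<in> V1 \<and> x - v \<in> V2)"

definition direct_sum_UNIV :: "'a::real_vector set \<Rightarrow> 'a set \<Rightarrow> bool" where
  "direct_sum_UNIV V1 V2 \<longleftrightarrow> V1 \<inter> V2 = {0} \<and> (\<forall>x. \<exists>a\<in>V1. \<exists>b\<in>V2. x = a + b)"

definition cos_angle :: "'a::real_inner set \<Rightarrow> 'a set \<Rightarrow> real" where
  "cos_angle V1 V2 = Inf {norm (oproj V2 x) / norm x | x. x \<in> V1 \<and> x \<noteq> 0}"

definition sin_angle :: "'a::real_inner set \<Rightarrow> 'a set \<Rightarrow> real" where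
  "sin_angle V1 V2 = Sup {norm (oproj (orthogonal_comp V2) x) / norm x | x. x \<in> V1 \<and> x \<noteq> 0}"

end

theory Submission
  imports Defs
begin

text \<open>
  Write P for the orthogonal projection onto S and Q for the oblique projection onto A along
  the orthogonal complement of S. Since Q x - P x is orthogonal to S, we have P (Q x) = P x and
  B x = P a + lam (a - P a) with a = Q x in A: the range of B is A with every component
  orthogonal to S shrunk by the factor lam. If a vector a makes an angle with cosine c and
  sine s with S, its image has squared cosine 1 / (1 + lam^2 s^2 / c^2); both bounds follow by
  estimating s / c through the extremal angles of A and taking the infimum over A.
  The lower bound needs cos(A, S) > 0. This holds because Q is bounded by the closed graph
  theorem and Q (P a) = a for a in A, so that the norm of a is at most the norm of Q times
  the norm of P a.
\<close>

lemma closed_orthogonal_comp: "closed (orthogonal_comp V)"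
proof -
  have "orthogonal_comp V = (\<Inter>y\<in>V. {x. inner y x = 0})"
    by (auto simp: orthogonal_comp_def orthogonal_def)
  moreover have "closed (\<Inter>y\<in>V. {x. inner y x = 0})"
    by (intro closed_INT ballI closed_Collect_eq continuous_intros)
  ultimately show ?thesis by simp
qed

lemma orthogonal_comp_Int_self:
  fixes x :: "'a::real_inner"
  assumes "x \<in> V" "x \<in> orthogonal_comp V"
  shows "x = 0"
  using assms by (auto simp: orthogonal_comp_def orthogonal_def)

lemma oproj_unique:
  fixes V :: "'a::real_inner set"
  assumes "subspace V" "v \<in> V" "x - v \<in> orthogonal_comp V"
  shows "oproj V x = v"
  unfolding oproj_def
proof (rule the_equality)
  show "v \<in> V \<and> x - v \<in> orthogonal_comp V" using assms by blast
next
  fix v' assume v': "v' \<in> V \<and> x - v' \<in> orthogonal_comp V"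
  have "v' - v = (x - v) - (x - v')" by simp
  then have "v' - v \<in> orthogonal_comp V"
    using v' assms subspace_orthogonal_comp by (metis subspace_diff)
  moreover have "v' - v \<in> V" using v' assms by (simp add: subspace_diff)
  ultimately show "v' = v" using orthogonal_comp_Int_self by fastforce
qed

lemma norm_diff_midpoint_parallelogram:
  fixes x a b :: "'a::real_inner"
  shows "(norm (a - b))\<^sup>2 = 2 * (norm (x - a))\<^sup>2 + 2 * (norm (x - b))\<^sup>2 - 4 * (norm (x - midpoint a b))\<^sup>2"
  by (simp add: midpoint_def power2_norm_eq_inner inner_add inner_diff inner_commute algebra_simps)

lemma closed_convex_nearest_point_exists:
  fixes S :: "'a::{real_inner,complete_space} set"
  assumes "closed S" "convex S" "S \<noteq> {}"
  shows "\<exists>v\<in>S. \<forall>s\<in>S. norm (x - v) \<le> norm (x - s)"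
proof -
  define D where "D = (\<lambda>s. (norm (x - s))\<^sup>2) ` S"
  define d where "d = Inf D"
  have bdd: "bdd_below D" unfolding D_def by (rule bdd_belowI2[of _ 0]) simp
  have d_le: "d \<le> (norm (x - s))\<^sup>2" if "s \<in> S" for s
    unfolding d_def D_def using bdd that by (auto intro: cInf_lower simp: D_def)
  have "\<exists>s\<in>S. (norm (x - s))\<^sup>2 < d + inverse (real (Suc n))" for n
    using cInf_lessD[of D "d + inverse (real (Suc n))"] assms(3) by (auto simp: d_def D_def)
  then obtain y where y: "\<And>n. y n \<in> S" "\<And>n. (norm (x - y n))\<^sup>2 < d + inverse (real (Suc n))"
    by metis
  have close: "(norm (y m - y n))\<^sup>2 \<le> 2 * inverse (real (Suc m)) + 2 * inverse (real (Suc n))" for m n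
  proof -
    have "midpoint (y m) (y n) \<in> S"
      using assms(2) y(1) midpoint_in_closed_segment closed_segment_subset by blast
    then have "d \<le> (norm (x - midpoint (y m) (y n)))\<^sup>2" by (rule d_le)
    then show ?thesis
      using norm_diff_midpoint_parallelogram[of "y m" "y n" x] y(2)[of m] y(2)[of n] by linarith
  qed
  have "Cauchy y"
  proof (rule CauchyI)
    fix e :: real assume "0 < e"
    then obtain M where M: "inverse (real (Suc M)) < e\<^sup>2 / 4"
      using reals_Archimedean[of "e\<^sup>2 / 4"] by auto
    have "norm (y m - y n) < e" if "M \<le> m" "M \<le> n" for m n
    proof -
      have "inverse (real (Suc m)) \<le> inverse (real (Suc M))" "inverse (real (Suc n)) \<le> inverse (real (Suc M))"
        using that by (auto intro!: le_imp_inverse_le)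
      then have "(norm (y m - y n))\<^sup>2 < e\<^sup>2" using close[of m n] M by linarith
      then show ?thesis using \<open>0 < e\<close> by (simp add: power_less_imp_less_base)
    qed
    then show "\<exists>M. \<forall>m\<ge>M. \<forall>n\<ge>M. norm (y m - y n) < e" by blast
  qed
  then obtain v where v: "y \<longlonglongrightarrow> v" using Cauchy_convergent_iff convergent_def by blast
  have "v \<in> S" using closed_sequentially[OF assms(1)] y(1) v by blast
  moreover have "(norm (x - v))\<^sup>2 \<le> d"
  proof (rule LIMSEQ_le)
    show "(\<lambda>n. (norm (x - y n))\<^sup>2) \<longlonglongrightarrow> (norm (x - v))\<^sup>2" by (intro tendsto_intros v)
    show "(\<lambda>n. d + inverse (real (Suc n))) \<longlonglongrightarrow> d" by (rule LIMSEQ_inverse_real_of_nat_add)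
    show "\<exists>N. \<forall>n\<ge>N. (norm (x - y n))\<^sup>2 \<le> d + inverse (real (Suc n))" using y(2) less_imp_le by blast
  qed
  ultimately show ?thesis using d_le by (meson order_trans power2_le_imp_le norm_ge_zero)
qed

lemma nearest_point_subspace_orthogonal:
  fixes S :: "'a::real_inner set"
  assumes "subspace S" "v \<in> S" and nearest: "\<And>s. s \<in> S \<Longrightarrow> norm (x - v) \<le> norm (x - s)"
  shows "x - v \<in> orthogonal_comp S"
  unfolding orthogonal_comp_def orthogonal_def
proof clarify
  fix y assume "y \<in> S"
  define w where "w = x - v"
  define c where "c = inner y w"
  show "inner y (x - v) = 0"
  proof (cases "y = 0")
    case False
    then have yy: "inner y y > 0" by simp
    define t where "t = c / inner y y"
    have "v + t *\<^sub>R y \<in> S" using assms \<open>y \<in> S\<close> by (simp add: subspace_add subspace_scale)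
    then have "(norm w)\<^sup>2 \<le> (norm (w - t *\<^sub>R y))\<^sup>2"
      using nearest[of "v + t *\<^sub>R y"] by (intro power_mono) (auto simp: w_def algebra_simps)
    also have "\<dots> = (norm w)\<^sup>2 - 2 * t * c + t\<^sup>2 * inner y y"
      unfolding power2_norm_eq_inner
      by (simp add: inner_diff c_def inner_commute algebra_simps power2_eq_square)
    also have "\<dots> = (norm w)\<^sup>2 - c\<^sup>2 / inner y y"
      using yy by (simp add: t_def field_simps power2_eq_square)
    finally have "c\<^sup>2 \<le> 0" using yy by (simp add: divide_le_0_iff)
    then show ?thesis by (simp add: c_def w_def)
  qed simp
qed

definition cos_angle_vec :: "'a::real_inner set \<Rightarrow> 'a \<Rightarrow> real" where
  "cos_angle_vec V x = norm (oproj V x) / norm x"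

definition sin_angle_vec :: "'a::real_inner set \<Rightarrow> 'a \<Rightarrow> real" where
  "sin_angle_vec V x = norm (x - oproj V x) / norm x"

definition scale_perp :: "'a::real_inner set \<Rightarrow> real \<Rightarrow> 'a \<Rightarrow> 'a" where
  "scale_perp V lam x = oproj V x + lam *\<^sub>R (x - oproj V x)"

lemma cos_angle_eq_Inf: "cos_angle V1 V2 = Inf (cos_angle_vec V2 ` (V1 - {0}))"
  unfolding cos_angle_def cos_angle_vec_def by (rule arg_cong[where f = Inf]) auto

locale closed_subspace =
  fixes S :: "'a::{real_inner,complete_space} set"
  assumes subspace: "subspace S" and closed: "closed S"
begin

lemma oproj_in: "oproj S x \<in> S"
  and oproj_orthogonal: "x - oproj S x \<in> orthogonal_comp S"
proof -
  obtain v where v: "v \<in> S" "\<And>s. s \<in> S \<Longrightarrow> norm (x - v) \<le> norm (x - s)"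
    using closed_convex_nearest_point_exists[OF closed subspace_imp_convex[OF subspace]]
      subspace_0[OF subspace] by blast
  then have "x - v \<in> orthogonal_comp S" by (rule nearest_point_subspace_orthogonal[OF subspace])
  then have "oproj S x = v" by (rule oproj_unique[OF subspace v(1)])
  with v(1) \<open>x - v \<in> _\<close> show "oproj S x \<in> S" "x - oproj S x \<in> orthogonal_comp S" by simp_all
qed

lemma oproj_Pythagorean: "(norm x)\<^sup>2 = (norm (oproj S x))\<^sup>2 + (norm (x - oproj S x))\<^sup>2"
proof -
  have "orthogonal (oproj S x) (x - oproj S x)"
    using oproj_in oproj_orthogonal by (auto simp: orthogonal_comp_def)
  then show ?thesis using norm_add_Pythagorean by fastforce
qed

lemma oproj_orthogonal_comp: "oproj (orthogonal_comp S) x = x - oproj S x"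
  by (rule oproj_unique[OF subspace_orthogonal_comp oproj_orthogonal])
    (use oproj_in orthogonal_comp_subset in auto)

lemma oproj_zero: "oproj S 0 = 0"
  by (rule oproj_unique[OF subspace subspace_0[OF subspace]])
    (simp add: subspace_0[OF subspace_orthogonal_comp])

lemma sin_angle_eq_Sup: "sin_angle V S = Sup (sin_angle_vec S ` (V - {0}))"
  unfolding sin_angle_def sin_angle_vec_def oproj_orthogonal_comp
  by (rule arg_cong[where f = Sup]) auto

lemma cos_angle_vec_orthogonal_comp: "cos_angle_vec (orthogonal_comp S) x = sin_angle_vec S x"
  by (simp add: cos_angle_vec_def sin_angle_vec_def oproj_orthogonal_comp)

lemma sin_angle_vec_orthogonal_comp: "sin_angle_vec (orthogonal_comp S) x = cos_angle_vec S x"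
  by (simp add: cos_angle_vec_def sin_angle_vec_def oproj_orthogonal_comp)

lemma cos_angle_vec_bounds: "0 \<le> cos_angle_vec S x" "cos_angle_vec S x \<le> 1"
  and sin_angle_vec_bounds: "0 \<le> sin_angle_vec S x" "sin_angle_vec S x \<le> 1"
proof -
  have "norm (oproj S x) \<le> norm x" "norm (x - oproj S x) \<le> norm x"
    using oproj_Pythagorean[of x] by (auto intro: power2_le_imp_le)
  then show "0 \<le> cos_angle_vec S x" "cos_angle_vec S x \<le> 1"
    "0 \<le> sin_angle_vec S x" "sin_angle_vec S x \<le> 1"
    by (auto simp: cos_angle_vec_def sin_angle_vec_def divide_le_eq_1)
qed

lemma oproj_scale_perp: "oproj S (scale_perp S lam x) = oproj S x"
  by (rule oproj_unique[OF subspace oproj_in])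
    (simp add: scale_perp_def subspace_scale[OF subspace_orthogonal_comp oproj_orthogonal])

lemma norm_scale_perp:
  "norm (scale_perp S lam x) = sqrt ((norm (oproj S x))\<^sup>2 + lam\<^sup>2 * (norm (x - oproj S x))\<^sup>2)"
proof -
  have "orthogonal (oproj S x) (lam *\<^sub>R (x - oproj S x))"
    using oproj_in oproj_orthogonal
    by (auto simp: orthogonal_comp_def orthogonal_clauses)
  then have "(norm (scale_perp S lam x))\<^sup>2 = (norm (oproj S x))\<^sup>2 + lam\<^sup>2 * (norm (x - oproj S x))\<^sup>2"
    unfolding scale_perp_def by (simp add: norm_add_Pythagorean power_mult_distrib)
  then show ?thesis by (metis norm_ge_zero real_sqrt_unique)
qed

lemma cos_angle_vec_scale_perp_sq:
  assumes "oproj S x \<noteq> 0"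
  shows "(cos_angle_vec S (scale_perp S lam x))\<^sup>2
    = 1 / (1 + lam\<^sup>2 * ((sin_angle_vec S x)\<^sup>2 / (cos_angle_vec S x)\<^sup>2))"
proof -
  have "x \<noteq> 0" using assms oproj_zero by auto
  have "0 < (norm (oproj S x))\<^sup>2 + lam\<^sup>2 * (norm (x - oproj S x))\<^sup>2"
    using assms by (simp add: add_pos_nonneg)
  then show ?thesis
    using assms \<open>x \<noteq> 0\<close>
    by (simp add: cos_angle_vec_def sin_angle_vec_def oproj_scale_perp norm_scale_perp
        power_divide field_simps)
qed

lemma cos_angle_vec_le_scale_perp:
  assumes "\<bar>lam\<bar> \<le> 1"
  shows "cos_angle_vec S x \<le> cos_angle_vec S (scale_perp S lam x)"
proof -
  have "lam\<^sup>2 \<le> 1" using assms by (simp add: abs_square_le_1)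
  then have "lam\<^sup>2 * (norm (x - oproj S x))\<^sup>2 \<le> (norm (x - oproj S x))\<^sup>2"
    by (simp add: mult_left_le_one_le)
  then have "norm (scale_perp S lam x) \<le> norm x"
    using oproj_Pythagorean[of x] by (simp add: norm_scale_perp real_le_lsqrt)
  moreover have "x \<noteq> 0 \<and> scale_perp S lam x \<noteq> 0" if "oproj S x \<noteq> 0"
    using that oproj_scale_perp oproj_zero by metis
  ultimately show ?thesis
    unfolding cos_angle_vec_def oproj_scale_perp
    by (cases "oproj S x = 0") (auto intro!: divide_left_mono)
qed

end

lemma closure_sublevel_contains_ball:
  fixes f :: "'a::{real_normed_vector,complete_space} \<Rightarrow> real"
  shows "\<exists>N x0 r. 0 < r \<and> ball x0 r \<subseteq> closure {x. f x \<le> real N}"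
proof -
  define F where "F N = closure {x. f x \<le> real N}" for N
  have "\<Union>(range F) = UNIV"
  proof -
    have "x \<in> F (nat \<lceil>f x\<rceil>)" for x
      unfolding F_def using closure_subset real_nat_ceiling_ge by fastforce
    then show ?thesis by blast
  qed
  then have "euclidean interior_of \<Union>(range F) \<noteq> {}" by simp
  then obtain N where "interior (F N) \<noteq> {}"
    using Baire_category_alt[of euclidean "range F"]
    by (auto simp: F_def completely_metrizable_space_euclidean closed_closedin[symmetric])
  then obtain x0 r where "0 < r" "ball x0 r \<subseteq> F N" by (meson ex_in_conv mem_interior)
  then show ?thesis unfolding F_def by blast
qed

context
  fixes Q :: "'a::real_normed_vector \<Rightarrow> 'b::real_normed_vector"
  assumes linear: "linear Q"
begin

lemma closure_sublevel_contains_ball_origin: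
  assumes "ball x0 r \<subseteq> closure {x. norm (Q x) \<le> M}"
  shows "ball 0 r \<subseteq> closure {x. norm (Q x) \<le> 2 * M}"
proof (clarsimp simp: closure_approachable)
  fix w :: 'a and e :: real assume "norm w < r" "0 < e"
  moreover have "0 < r" using \<open>norm w < r\<close> by (meson norm_ge_zero le_less_trans)
  ultimately have "x0 + w \<in> closure {x. norm (Q x) \<le> M}" "x0 \<in> closure {x. norm (Q x) \<le> M}"
    using assms \<open>0 < e\<close> by (auto simp: dist_norm subset_iff)
  then obtain a b where ab: "norm (Q a) \<le> M" "dist a (x0 + w) < e/2" "norm (Q b) \<le> M" "dist b x0 < e/2"
    unfolding closure_approachable using \<open>0 < e\<close> by (metis half_gt_zero mem_Collect_eq)
  have "norm (Q (a - b)) \<le> 2 * M"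
    using ab norm_triangle_ineq4[of "Q a" "Q b"] linear_diff[OF linear] by simp
  moreover have "dist (a - b) w < e"
  proof -
    have "a - b - w = (a - (x0 + w)) - (b - x0)" by (simp add: algebra_simps)
    then have "norm (a - b - w) \<le> norm (a - (x0 + w)) + norm (b - x0)"
      by (metis norm_triangle_ineq4)
    then show ?thesis using ab by (simp add: dist_norm)
  qed
  ultimately show "\<exists>y. norm (Q y) \<le> 2 * M \<and> dist y w < e" by blast
qed

lemma halving_approximation:
  assumes "0 < r" "ball 0 r \<subseteq> closure {x. norm (Q x) \<le> M}"
  shows "\<exists>u. norm (Q u) \<le> (2 * M / r) * norm w \<and> norm (w - u) \<le> norm w / 2"
proof (cases "w = 0")
  case True
  then show ?thesis using linear_0[OF linear] by (intro exI[of _ 0]) simp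
next
  case False
  define t where "t = r / (2 * norm w)"
  have t: "0 < t" using assms False by (simp add: t_def)
  have "t *\<^sub>R w \<in> closure {x. norm (Q x) \<le> M}"
    using assms False t by (auto simp: t_def subset_iff)
  then obtain u' where u': "norm (Q u') \<le> M" "dist u' (t *\<^sub>R w) < r / 4"
    unfolding closure_approachable using assms by (metis divide_pos_pos mem_Collect_eq zero_less_numeral)
  define u where "u = (1 / t) *\<^sub>R u'"
  have "norm (Q u) = norm (Q u') / t"
    using t by (simp add: u_def linear_scale[OF linear])
  also have "\<dots> \<le> M / t" using u' t by (simp add: divide_right_mono)
  also have "\<dots> = (2 * M / r) * norm w" using assms False by (simp add: t_def field_simps)
  finally have "norm (Q u) \<le> (2 * M / r) * norm w" .
  moreover have "norm (w - u) \<le> norm w / 2"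
  proof -
    have "w - u = (1 / t) *\<^sub>R (t *\<^sub>R w - u')" using t by (simp add: u_def algebra_simps)
    then have "norm (w - u) = dist u' (t *\<^sub>R w) / t" using t by (simp add: dist_norm norm_minus_commute)
    also have "\<dots> \<le> (r / 4) / t" using u' t by (intro divide_right_mono) auto
    also have "\<dots> = norm w / 2" using assms False by (simp add: t_def field_simps)
    finally show ?thesis .
  qed
  ultimately show ?thesis by blast
qed

end

text \<open>
  The library's criteria for summability require the sort banach, which the sort
  {real_normed_vector, complete_space} used here does not provide; hence the following
  metric-space version of the comparison test.
\<close>

lemma dist_le_sum_of_dist_Suc:
  fixes f :: "nat \<Rightarrow> 'a::metric_space"
  assumes "\<And>n. dist (f n) (f (Suc n)) \<le> g n" "m \<le> n"
  shows "dist (f m) (f n) \<le> sum g {m..<n}"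
  using assms(2)
proof (induction n rule: dec_induct)
  case (step n)
  have "dist (f m) (f (Suc n)) \<le> dist (f m) (f n) + dist (f n) (f (Suc n))" by (rule dist_triangle)
  also have "\<dots> \<le> sum g {m..<n} + g n" using step.IH assms(1) by (rule add_mono)
  finally show ?case using step.hyps by simp
qed simp

lemma Cauchy_if_summable_dist_Suc:
  fixes f :: "nat \<Rightarrow> 'a::metric_space"
  assumes "\<And>n. dist (f n) (f (Suc n)) \<le> g n" "summable g"
  shows "Cauchy f"
proof (rule metric_CauchyI)
  fix e :: real assume "0 < e"
  then obtain N where N: "\<And>m n. N \<le> m \<Longrightarrow> norm (sum g {m..<n}) < e"
    using assms(2) unfolding summable_Cauchy by (meson \<open>0 < e\<close>)
  have "dist (f m) (f n) < e" if "N \<le> m" "m \<le> n" for m n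
    using dist_le_sum_of_dist_Suc[where f=f and g=g, OF assms(1) \<open>m \<le> n\<close>] N[OF \<open>N \<le> m\<close>, of n] by simp
  then show "\<exists>M. \<forall>m\<ge>M. \<forall>n\<ge>M. dist (f m) (f n) < e"
    by (metis dist_commute nle_le order_trans)
qed

lemma bounded_by_halving_approximation:
  fixes Q :: "'a::real_normed_vector \<Rightarrow> 'b::{real_normed_vector,complete_space}"
  assumes "linear Q" "0 \<le> K"
    and closed_graph: "\<And>f x y. f \<longlonglongrightarrow> x \<Longrightarrow> (\<lambda>n. Q (f n)) \<longlonglongrightarrow> y \<Longrightarrow> Q x = y"
    and U: "\<And>w. norm (Q (U w)) \<le> K * norm w" "\<And>w. norm (w - U w) \<le> norm w / 2"
  shows "norm (Q z) \<le> 2 * K * norm z"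
proof -
  \<comment> \<open>z is the sum of the successive approximations U (r n) of the remainders r n\<close>
  define r where "r n = ((\<lambda>w. w - U w) ^^ n) z" for n
  have r_Suc: "r (Suc n) = r n - U (r n)" for n by (simp add: r_def)
  have r_bound: "norm (r n) \<le> norm z * (1/2) ^ n" for n
  proof (induction n)
    case (Suc n)
    have "norm (r (Suc n)) \<le> norm (r n) / 2" using U(2) by (simp add: r_Suc)
    also have "\<dots> \<le> norm z * (1/2) ^ Suc n" using Suc by simp
    finally show ?case .
  qed (simp add: r_def)
  define g where "g n = K * norm z * (1/2) ^ n" for n
  have g_sums: "g sums (2 * K * norm z)"
    using sums_mult[OF geometric_sums[of "1/2::real"], of "K * norm z"]
    by (simp add: g_def[abs_def] mult.commute mult.left_commute)
  define s where "s n = Q (z - r n)" for n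
  have s_step: "dist (s n) (s (Suc n)) \<le> g n" for n
  proof -
    have "dist (s n) (s (Suc n)) = norm (Q (U (r n)))"
      by (simp add: s_def r_Suc dist_norm linear_diff[OF assms(1), symmetric]
          linear_neg[OF assms(1)])
    also have "\<dots> \<le> K * (norm z * (1/2) ^ n)"
      using order_trans[OF U(1) mult_left_mono[OF r_bound \<open>0 \<le> K\<close>]] .
    finally show ?thesis by (simp add: g_def mult.assoc)
  qed
  obtain y where y: "s \<longlonglongrightarrow> y"
    using Cauchy_if_summable_dist_Suc[OF s_step sums_summable[OF g_sums]]
    by (auto simp: Cauchy_convergent_iff convergent_def)
  have "r \<longlonglongrightarrow> 0"
    by (rule Lim_null_comparison[where g="\<lambda>n. norm z * (1/2) ^ n", OF always_eventually])
      (use r_bound in \<open>auto intro!: tendsto_mult_right_zero LIMSEQ_realpow_zero\<close>)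
  then have "(\<lambda>n. z - r n) \<longlonglongrightarrow> z" using tendsto_diff[OF tendsto_const] by fastforce
  then have "Q z = y" by (rule closed_graph) (use y in \<open>simp add: s_def[abs_def]\<close>)
  moreover have "norm (s n) \<le> 2 * K * norm z" for n
  proof -
    have "norm (s n) = dist (s 0) (s n)" by (simp add: s_def r_def linear_0[OF assms(1)])
    also have "\<dots> \<le> sum g {0..<n}" by (rule dist_le_sum_of_dist_Suc[where f=s and g=g, OF s_step]) simp
    also have "\<dots> \<le> 2 * K * norm z"
      using sum_le_suminf[OF sums_summable[OF g_sums]] sums_unique[OF g_sums] \<open>0 \<le> K\<close>
      by (force simp: g_def atLeast0LessThan)
    finally show ?thesis .
  qed
  ultimately show ?thesis
    using tendsto_upperbound[OF tendsto_norm[OF y]] by (simp add: always_eventually)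
qed

lemma closed_graph_imp_bounded_linear:
  fixes Q :: "'a::{real_normed_vector,complete_space} \<Rightarrow> 'b::{real_normed_vector,complete_space}"
  assumes "linear Q"
    and closed_graph: "\<And>f x y. f \<longlonglongrightarrow> x \<Longrightarrow> (\<lambda>n. Q (f n)) \<longlonglongrightarrow> y \<Longrightarrow> Q x = y"
  shows "bounded_linear Q"
proof -
  obtain N x0 r where r: "0 < r" "ball x0 r \<subseteq> closure {x. norm (Q x) \<le> real N}"
    using closure_sublevel_contains_ball[of "\<lambda>x. norm (Q x)"] by blast
  then have "ball 0 r \<subseteq> closure {x. norm (Q x) \<le> 2 * real N}"
    by (intro closure_sublevel_contains_ball_origin[OF assms(1)])
  then obtain U where U: "\<And>w. norm (Q (U w)) \<le> (2 * (2 * real N) / r) * norm w"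
      "\<And>w. norm (w - U w) \<le> norm w / 2"
    using halving_approximation[OF assms(1) \<open>0 < r\<close>] by metis
  have "norm (Q z) \<le> 2 * (2 * (2 * real N) / r) * norm z" for z
    by (rule bounded_by_halving_approximation[OF assms(1) _ closed_graph U]) (use r in simp)
  then have "norm (Q z) \<le> norm z * (2 * (2 * (2 * real N) / r))" for z
    by (simp add: mult.commute)
  then show ?thesis
    unfolding bounded_linear_def bounded_linear_axioms_def using assms(1) by blast
qed

locale complementary_subspaces =
  fixes A W :: "'a::real_vector set"
  assumes subspace_A: "subspace A" and subspace_W: "subspace W"
    and direct_sum: "direct_sum_UNIV A W"
begin

lemma obproj_unique:
  assumes "v \<in> A" "x - v \<in> W"
  shows "obproj A W x = v"
  unfolding obproj_def
proof (rule the_equality)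
  show "v \<in> A \<and> x - v \<in> W" using assms by blast
next
  fix v' assume v': "v' \<in> A \<and> x - v' \<in> W"
  have "v' - v = (x - v) - (x - v')" by simp
  then have "v' - v \<in> W" using v' assms subspace_W by (metis subspace_diff)
  moreover have "v' - v \<in> A" using v' assms subspace_A by (simp add: subspace_diff)
  ultimately have "v' - v \<in> A \<inter> W" by blast
  then show "v' = v" using direct_sum unfolding direct_sum_UNIV_def by simp
qed

lemma obproj_in: "obproj A W x \<in> A"
  and obproj_along: "x - obproj A W x \<in> W"
proof -
  obtain a b where "a \<in> A" "b \<in> W" "x = a + b"
    using direct_sum unfolding direct_sum_UNIV_def by blast
  then have "obproj A W x = a" by (intro obproj_unique) auto
  with \<open>a \<in> A\<close> \<open>b \<in> W\<close> \<open>x = a + b\<close>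
  show "obproj A W x \<in> A" "x - obproj A W x \<in> W" by auto
qed

lemma obproj_id: "a \<in> A \<Longrightarrow> obproj A W a = a"
  by (rule obproj_unique) (simp_all add: subspace_0[OF subspace_W])

lemma linear_obproj: "linear (obproj A W)"
proof (rule linearI)
  fix x y
  show "obproj A W (x + y) = obproj A W x + obproj A W y"
    using subspace_add[OF subspace_A obproj_in obproj_in] subspace_add[OF subspace_W obproj_along obproj_along]
    by (intro obproj_unique) (simp_all add: add_diff_add)
next
  fix c x
  show "obproj A W (c *\<^sub>R x) = c *\<^sub>R obproj A W x"
    using subspace_scale[OF subspace_A obproj_in] subspace_scale[OF subspace_W obproj_along]
    by (intro obproj_unique) (simp_all add: scaleR_diff_right)
qed

end

lemma bounded_linear_obproj:
  fixes A W :: "'a::{real_normed_vector,complete_space} set"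
  assumes "subspace A" "closed A" "subspace W" "closed W" "direct_sum_UNIV A W"
  shows "bounded_linear (obproj A W)"
proof -
  interpret complementary_subspaces A W using assms(1,3,5) by unfold_locales
  show ?thesis
  proof (rule closed_graph_imp_bounded_linear[OF linear_obproj])
    fix f x y assume f: "f \<longlonglongrightarrow> x" and Qf: "(\<lambda>n. obproj A W (f n)) \<longlonglongrightarrow> y"
    show "obproj A W x = y"
    proof (rule obproj_unique)
      show "y \<in> A" using closed_sequentially[OF assms(2) _ Qf] obproj_in by blast
      have "(\<lambda>n. f n - obproj A W (f n)) \<longlonglongrightarrow> x - y" using f Qf by (rule tendsto_diff)
      then show "x - y \<in> W"
        by (rule closed_sequentially[OF assms(4), rotated]) (simp add: obproj_along)
    qed
  qed
qed

lemma inverse_one_plus_ratio_antimono: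
  fixes l n d n' d' :: real
  assumes "0 < d" "d \<le> d'" "0 \<le> n'" "n' \<le> n"
  shows "1 / (1 + l\<^sup>2 * (n\<^sup>2 / d\<^sup>2)) \<le> 1 / (1 + l\<^sup>2 * (n'\<^sup>2 / d'\<^sup>2))"
proof -
  have "n'\<^sup>2 / d'\<^sup>2 \<le> n\<^sup>2 / d\<^sup>2"
    using assms by (intro frac_le power_mono) auto
  then have "l\<^sup>2 * (n'\<^sup>2 / d'\<^sup>2) \<le> l\<^sup>2 * (n\<^sup>2 / d\<^sup>2)" by (rule mult_left_mono) simp
  then show ?thesis by (intro divide_left_mono mult_pos_pos add_pos_nonneg) auto
qed

locale oblique_complement = closed_subspace S + complementary_subspaces A "orthogonal_comp S"
  for S A :: "'a::{real_inner,complete_space} set" +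
  assumes closed_A: "closed A"
begin

definition blend :: "real \<Rightarrow> 'a \<Rightarrow> 'a" where
  "blend lam x = lam *\<^sub>R obproj A (orthogonal_comp S) x + (1 - lam) *\<^sub>R oproj S x"

lemma oproj_ne_zero:
  assumes "a \<in> A" "a \<noteq> 0"
  shows "oproj S a \<noteq> 0"
proof
  assume "oproj S a = 0"
  then have "a \<in> A \<inter> orthogonal_comp S" using assms(1) oproj_orthogonal[of a] by simp
  then show False using assms(2) direct_sum by (auto simp: direct_sum_UNIV_def)
qed

lemma obproj_oproj: "a \<in> A \<Longrightarrow> obproj A (orthogonal_comp S) (oproj S a) = a"
  using subspace_neg[OF subspace_W oproj_orthogonal[of a]] by (intro obproj_unique) auto

lemma norm_le_oproj: "\<exists>C>0. \<forall>a\<in>A. norm a \<le> C * norm (oproj S a)"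
proof -
  obtain C where "0 < C" and C: "\<And>x. norm (obproj A (orthogonal_comp S) x) \<le> norm x * C"
    using bounded_linear.pos_bounded[OF bounded_linear_obproj[OF subspace_A closed_A
          subspace_orthogonal_comp closed_orthogonal_comp direct_sum]] by blast
  have "norm a \<le> C * norm (oproj S a)" if "a \<in> A" for a
    using C[of "oproj S a"] obproj_oproj[OF that] by (simp add: mult.commute)
  with \<open>0 < C\<close> show ?thesis by blast
qed

lemma cos_angle_pos:
  assumes "A \<noteq> {0}"
  shows "0 < cos_angle A S"
proof -
  obtain C where "0 < C" and C: "\<And>a. a \<in> A \<Longrightarrow> norm a \<le> C * norm (oproj S a)"
    using norm_le_oproj by blast
  have "A - {0} \<noteq> {}" using assms subspace_0[OF subspace_A] by auto
  moreover have "1 / C \<le> cos_angle_vec S a" if "a \<in> A - {0}" for a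
    using C[of a] that \<open>0 < C\<close> by (auto simp: cos_angle_vec_def field_simps)
  ultimately have "1 / C \<le> cos_angle A S"
    unfolding cos_angle_eq_Inf by (intro cINF_greatest)
  with \<open>0 < C\<close> show ?thesis by (meson divide_pos_pos zero_less_one less_le_trans)
qed

lemma blend_eq_scale_perp: "blend lam x = scale_perp S lam (obproj A (orthogonal_comp S) x)"
proof -
  let ?a = "obproj A (orthogonal_comp S) x"
  have "?a - oproj S x \<in> orthogonal_comp S"
    using subspace_diff[OF subspace_W oproj_orthogonal[of x] obproj_along[of x]] by simp
  then have "oproj S ?a = oproj S x" by (intro oproj_unique[OF subspace oproj_in])
  then show ?thesis by (simp add: blend_def scale_perp_def algebra_simps)
qed

lemma range_blend_minus_zero: "range (blend lam) - {0} = scale_perp S lam ` (A - {0})"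
proof -
  have "range (blend lam) = scale_perp S lam ` A"
    unfolding blend_eq_scale_perp using obproj_in obproj_id by (auto simp: image_iff) metis
  moreover have "scale_perp S lam a = 0 \<longleftrightarrow> a = 0" if "a \<in> A" for a
  proof
    assume "scale_perp S lam a = 0"
    then have "oproj S a = 0" using oproj_scale_perp[of lam a] oproj_zero by simp
    then show "a = 0" using oproj_ne_zero[OF that] by blast
  qed (simp add: scale_perp_def oproj_zero)
  ultimately show ?thesis by auto
qed

lemma cos_angle_range_blend:
  "cos_angle (range (blend lam)) S = Inf ((\<lambda>a. cos_angle_vec S (scale_perp S lam a)) ` (A - {0}))"
  unfolding cos_angle_eq_Inf range_blend_minus_zero image_image ..

lemma cos_angle_range_blend_lower_bound:
  assumes "A \<noteq> {0}"
  shows "1 / (1 + lam\<^sup>2 * ((sin_angle A S)\<^sup>2 / (cos_angle A S)\<^sup>2)) \<le> (cos_angle (range (blend lam)) S)\<^sup>2"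
    (is "?L \<le> _")
proof -
  have X: "A - {0} \<noteq> {}" using assms subspace_0[OF subspace_A] by auto
  have "sqrt ?L \<le> cos_angle_vec S (scale_perp S lam a)" if a: "a \<in> A - {0}" for a
  proof -
    have "cos_angle A S \<le> cos_angle_vec S a"
      unfolding cos_angle_eq_Inf using a cos_angle_vec_bounds(1) by (intro cINF_lower bdd_belowI2) auto
    moreover have "sin_angle_vec S a \<le> sin_angle A S"
      unfolding sin_angle_eq_Sup using a sin_angle_vec_bounds(2) by (intro cSUP_upper bdd_aboveI2) auto
    ultimately have "?L \<le> 1 / (1 + lam\<^sup>2 * ((sin_angle_vec S a)\<^sup>2 / (cos_angle_vec S a)\<^sup>2))"
      using cos_angle_pos[OF assms] sin_angle_vec_bounds(1) by (intro inverse_one_plus_ratio_antimono)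
    also have "\<dots> = (cos_angle_vec S (scale_perp S lam a))\<^sup>2"
      using a by (simp add: cos_angle_vec_scale_perp_sq oproj_ne_zero)
    finally have "?L \<le> (cos_angle_vec S (scale_perp S lam a))\<^sup>2" .
    then show ?thesis by (rule real_le_lsqrt[OF cos_angle_vec_bounds(1)])
  qed
  then have "sqrt ?L \<le> cos_angle (range (blend lam)) S"
    unfolding cos_angle_range_blend using X by (intro cINF_greatest)
  then have "(sqrt ?L)\<^sup>2 \<le> (cos_angle (range (blend lam)) S)\<^sup>2" by (rule power_mono) simp
  moreover have "0 \<le> ?L" by simp
  ultimately show ?thesis by simp
qed

lemma cos_angle_range_blend_upper_bound:
  assumes "A \<noteq> {0}"
  shows "(cos_angle (range (blend lam)) S)\<^sup>2
    \<le> 1 / (1 + lam\<^sup>2 * ((cos_angle A (orthogonal_comp S))\<^sup>2 / (sin_angle A (orthogonal_comp S))\<^sup>2))"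
proof -
  interpret perp: closed_subspace "orthogonal_comp S"
    by unfold_locales (rule subspace_orthogonal_comp closed_orthogonal_comp)+
  obtain a where a: "a \<in> A" "a \<noteq> 0" using assms subspace_0[OF subspace_A] by auto
  have "cos_angle (range (blend lam)) S \<le> cos_angle_vec S (scale_perp S lam a)"
    unfolding cos_angle_range_blend using a cos_angle_vec_bounds(1)
    by (intro cINF_lower bdd_belowI2) auto
  moreover have "0 \<le> cos_angle (range (blend lam)) S"
    unfolding cos_angle_range_blend using a cos_angle_vec_bounds(1) by (intro cINF_greatest) auto
  ultimately have "(cos_angle (range (blend lam)) S)\<^sup>2 \<le> (cos_angle_vec S (scale_perp S lam a))\<^sup>2"
    by (rule power_mono)
  also have "\<dots> = 1 / (1 + lam\<^sup>2 * ((sin_angle_vec S a)\<^sup>2 / (cos_angle_vec S a)\<^sup>2))"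
    using a by (simp add: cos_angle_vec_scale_perp_sq oproj_ne_zero)
  also have "\<dots> \<le> 1 / (1 + lam\<^sup>2 * ((cos_angle A (orthogonal_comp S))\<^sup>2 / (sin_angle A (orthogonal_comp S))\<^sup>2))"
  proof (rule inverse_one_plus_ratio_antimono)
    show "0 < cos_angle_vec S a"
      using a oproj_ne_zero by (simp add: cos_angle_vec_def)
    show "cos_angle_vec S a \<le> sin_angle A (orthogonal_comp S)"
      unfolding perp.sin_angle_eq_Sup sin_angle_vec_orthogonal_comp
      using a cos_angle_vec_bounds(2) by (intro cSUP_upper bdd_aboveI2) auto
    show "0 \<le> cos_angle A (orthogonal_comp S)"
      unfolding cos_angle_eq_Inf cos_angle_vec_orthogonal_comp
      using a sin_angle_vec_bounds(1) by (intro cINF_greatest) auto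
    show "cos_angle A (orthogonal_comp S) \<le> sin_angle_vec S a"
      unfolding cos_angle_eq_Inf cos_angle_vec_orthogonal_comp
      using a sin_angle_vec_bounds(1) by (intro cINF_lower bdd_belowI2) auto
  qed
  finally show ?thesis .
qed

lemma cos_angle_le_cos_angle_range_blend:
  assumes "A \<noteq> {0}" "\<bar>lam\<bar> \<le> 1"
  shows "cos_angle A S \<le> cos_angle (range (blend lam)) S"
  unfolding cos_angle_range_blend cos_angle_eq_Inf[of A]
  using assms subspace_0[OF subspace_A] cos_angle_vec_bounds(1)
  by (intro cINF_mono bdd_belowI2) (auto intro: cos_angle_vec_le_scale_perp)

end

theorem mainTheorem6:
  fixes S A :: "'a::{real_inner, complete_space} set" and lam :: real
  assumes "subspace S" "closed S" "subspace A" "closed A"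
    and "S \<noteq> {0}" "A \<noteq> {0}" "orthogonal_comp S \<noteq> {0}" "orthogonal_comp A \<noteq> {0}"
    and "direct_sum_UNIV A (orthogonal_comp S)"
    and "0 \<le> lam" "lam \<le> 1"
  defines "B \<equiv> (\<lambda>x. lam *\<^sub>R obproj A (orthogonal_comp S) x + (1 - lam) *\<^sub>R oproj S x)"
  shows "1 / (1 + lam\<^sup>2 * ((sin_angle A S)\<^sup>2 / (cos_angle A S)\<^sup>2)) \<le> (cos_angle (range B) S)\<^sup>2
       \<and> (cos_angle (range B) S)\<^sup>2 \<le> 1 / (1 + lam\<^sup>2 * ((cos_angle A (orthogonal_comp S))\<^sup>2 / (sin_angle A (orthogonal_comp S))\<^sup>2))
       \<and> cos_angle (range B) S \<ge> cos_angle A S"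
proof -
  \<comment> \<open>of the non-degeneracy hypotheses only A \<noteq> {0} is needed\<close>
  interpret oblique_complement S A
    using assms(1-4,9) by unfold_locales (auto intro: subspace_orthogonal_comp)
  have "B = blend lam" by (simp add: B_def blend_def fun_eq_iff)
  then show ?thesis
    using cos_angle_range_blend_lower_bound cos_angle_range_blend_upper_bound
      cos_angle_le_cos_angle_range_blend assms(6,10,11) by simp
qed

end
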